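(* Let $X=[-1,1]\times\mathbb{R}$ with the Lorentzian metric $g=-dt^2+ds^2$. Equip $X$ with the metric \[ d_{\mathrm N}(x,y)=\operatorname*{ess\,sup}_{z\in X}\big|\,|\sigma(x,z)|-|\sigma(y,z)|\,\big|. \] Then no continuous curve $c\colon[0,1]\to X$ with $x_2(c(0))\neq x_2(c(1))$ is $d_{\mathrm N}$-rectifiable.
   Context: The signed Lorentzian distance $\sigma$ of $g$ is defined as follows, with the supremum taken over causal curves $c$ from $x$ to $y$ and $l(c)=\int\sqrt{-g(c',c')}$: \begin{itemize} \item $\sigma(x,y)=\sup l(c)$ if $y$ lies in the causal future of $x$; \item $\sigma(x,y)=-\sup l(c)$ if $y$ lies in the causal past of $x$; \item $\sigma(x,y)=0$ otherwise. \end{itemize} The essential supremum is with respect to Lebesgue measure. $x_2$ denotes the second coordinate $s$. A curve is $d_{\mathrm N}$-rectifiable if $\sup\sum_i d_{\mathrm N}(c(t_{i-1}),c(t_i))<\infty$, the supremum being over all finite partitions $0=t_0<\dots<t_N=1$. *)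

theory Defs
  imports "HOL-Analysis.Analysis" "HOL-Probability.Essential_Supremum"
begin

text \<open>The strip X = [-1,1] x R, points are pairs (t,s); t time coordinate, s = x_2.\<close>
definition strip :: "(real \<times> real) set" where
  "strip = {-1..1} \<times> UNIV"

definition gL :: "real \<times> real \<Rightarrow> real \<times> real \<Rightarrow> real" where
  "gL v w = - fst v * fst w + snd v * snd w"

definition future_causal_curve :: "(real \<Rightarrow> real \<times> real) \<Rightarrow> real \<times> real \<Rightarrow> real \<times> real \<Rightarrow> bool" where
  "future_causal_curve c x y \<longleftrightarrow>
     c piecewise_C1_differentiable_on {0..1} \<and> c ` {0..1} \<subseteq> strip \<and> c 0 = x \<and> c 1 = y \<and>
     (\<forall>t\<in>{0..1}. c differentiable (at t within {0..1}) \<longrightarrow>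
        (let v = vector_derivative c (at t within {0..1}) in gL v v \<le> 0 \<and> fst v \<ge> 0))"

definition past_causal_curve :: "(real \<Rightarrow> real \<times> real) \<Rightarrow> real \<times> real \<Rightarrow> real \<times> real \<Rightarrow> bool" where
  "past_causal_curve c x y \<longleftrightarrow>
     c piecewise_C1_differentiable_on {0..1} \<and> c ` {0..1} \<subseteq> strip \<and> c 0 = x \<and> c 1 = y \<and>
     (\<forall>t\<in>{0..1}. c differentiable (at t within {0..1}) \<longrightarrow>
        (let v = vector_derivative c (at t within {0..1}) in gL v v \<le> 0 \<and> fst v \<le> 0))"

definition lor_length :: "(real \<Rightarrow> real \<times> real) \<Rightarrow> real" where
  "lor_length c = integral {0..1}
     (\<lambda>t. let v = vector_derivative c (at t within {0..1}) in sqrt (- gL v v))"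

definition causal_future :: "real \<times> real \<Rightarrow> (real \<times> real) set" where
  "causal_future x = {y. \<exists>c. future_causal_curve c x y}"

definition causal_past :: "real \<times> real \<Rightarrow> (real \<times> real) set" where
  "causal_past x = {y. \<exists>c. past_causal_curve c x y}"

definition sigma :: "real \<times> real \<Rightarrow> real \<times> real \<Rightarrow> real" where
  "sigma x y =
     (if y \<in> causal_future x then Sup (lor_length ` {c. future_causal_curve c x y})
      else if y \<in> causal_past x then - Sup (lor_length ` {c. past_causal_curve c x y})
      else 0)"

definition dN :: "real \<times> real \<Rightarrow> real \<times> real \<Rightarrow> ereal" where
  "dN x y = esssup (lebesgue_on strip)
     (\<lambda>z. ereal \<bar>\<bar>sigma x z\<bar> - \<bar>sigma y z\<bar>\<bar>)"

definition dN_rectifiable :: "(real \<Rightarrow> real \<times> real) \<Rightarrow> bool" where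
  "dN_rectifiable c \<longleftrightarrow>
     (SUP (N, t) \<in> {(N::nat, t::nat \<Rightarrow> real). t 0 = 0 \<and> t N = 1 \<and> (\<forall>i<N. t i < t (Suc i))}.
        (\<Sum>i\<in>{1..N}. dN (c (t (i - 1))) (c (t i)))) < \<infinity>"

end

theory Submission
  imports Defs
begin

(* Causal curves stay inside the null cones |ds| <= |dt|, so sigma(x,z) = 0 whenever z is
   spacelike to x, while straight lines give |sigma(x,z)| >= sqrt(dt^2 - ds^2) for timelike z.
   If p and q are close and their s-coordinates differ by delta > 0, a square of side delta/4
   just inside the light cone of p, on the side away from q, consists of points at proper time
   at least sqrt(delta)/4 from p but spacelike to q; as it has positive measure,
   d_N(p,q) >= sqrt(delta)/4.  Along a fine partition of c with s-increments delta_i <= rho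
   this gives a d_N-length at least sum sqrt(delta_i)/4 >= |s(c 1) - s(c 0)| / (4 sqrt rho),
   which is unbounded as rho tends to 0. *)

lemma has_integral_le_off_finite:
  fixes g h :: "real \<Rightarrow> real"
  assumes g: "(g has_integral i) {a..b}" and h: "(h has_integral j) {a..b}"
    and S: "finite S" and le: "\<And>x. x \<in> {a<..<b} - S \<Longrightarrow> g x \<le> h x"
  shows "i \<le> j"
proof -
  let ?S = "S \<union> {a, b}"
  have "((\<lambda>x. if x \<in> ?S then 0 else g x) has_integral i) {a..b}"
    by (rule has_integral_spike_finite[OF _ _ g, of ?S]) (use S in auto)
  moreover have "((\<lambda>x. if x \<in> ?S then 0 else h x) has_integral j) {a..b}"
    by (rule has_integral_spike_finite[OF _ _ h, of ?S]) (use S in auto)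
  ultimately show ?thesis
    by (rule has_integral_le) (use le in force)
qed

lemma causal_vector_bounds:
  assumes "gL v v \<le> 0"
  shows "\<bar>snd v\<bar> \<le> \<bar>fst v\<bar>" and "sqrt (- gL v v) \<le> \<bar>fst v\<bar>"
proof -
  show "\<bar>snd v\<bar> \<le> \<bar>fst v\<bar>"
    using assms by (simp add: abs_le_square_iff gL_def power2_eq_square)
  have "- gL v v \<le> (fst v)\<^sup>2"
    by (simp add: gL_def power2_eq_square)
  then show "sqrt (- gL v v) \<le> \<bar>fst v\<bar>"
    using real_sqrt_le_mono by fastforce
qed

(* The sign f = 1 or f = -1 is the time orientation: future resp. past causal curves. *)
lemma causal_curve_bounds:
  fixes c :: "real \<Rightarrow> real \<times> real"
  assumes f: "\<bar>f\<bar> = 1" and C1: "c piecewise_C1_differentiable_on {0..1}"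
    and causal: "\<forall>t\<in>{0..1}. c differentiable (at t within {0..1}) \<longrightarrow>
        (let v = vector_derivative c (at t within {0..1}) in gL v v \<le> 0 \<and> f * fst v \<ge> 0)"
  shows "\<bar>snd (c 1) - snd (c 0)\<bar> \<le> f * (fst (c 1) - fst (c 0))"
    and "lor_length c \<le> f * (fst (c 1) - fst (c 0))"
proof -
  define V where "V t = vector_derivative c (at t within {0..1})" for t
  obtain S D where S: "finite S" and cont: "continuous_on {0..1} c"
    and D: "\<And>t. t \<in> {0..1} - S \<Longrightarrow> (c has_vector_derivative D t) (at t)"
    using C1 unfolding piecewise_C1_differentiable_on_def C1_differentiable_on_def by blast
  have V_deriv: "(c has_vector_derivative V t) (at t)"
    and Vbounds: "\<bar>snd (V t)\<bar> \<le> f * fst (V t)" "sqrt (- gL (V t) (V t)) \<le> f * fst (V t)"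
    if t: "t \<in> {0<..<1} - S" for t
  proof -
    have "V t = D t"
      unfolding V_def by (rule vector_derivative_at_within_ivl) (use D t in auto)
    then show "(c has_vector_derivative V t) (at t)"
      using D t by auto
    then have "c differentiable (at t within {0..1})"
      by (meson differentiable_at_withinI differentiableI_vector)
    then have "gL (V t) (V t) \<le> 0" "0 \<le> f * fst (V t)"
      using causal t unfolding V_def Let_def by auto
    moreover from this f have "\<bar>fst (V t)\<bar> = f * fst (V t)"
      by (metis abs_mult abs_of_nonneg mult_1)
    ultimately show "\<bar>snd (V t)\<bar> \<le> f * fst (V t)" "sqrt (- gL (V t) (V t)) \<le> f * fst (V t)"
      using causal_vector_bounds by metis+
  qed
  have V_int: "(V has_integral (c 1 - c 0)) {0..1}"
    by (rule fundamental_theorem_of_calculus_interior_strong[OF S _ _ cont]) (use V_deriv in auto)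
  have Vfst: "((\<lambda>t. f * fst (V t)) has_integral f * (fst (c 1) - fst (c 0))) {0..1}"
    using has_integral_mult_right[OF has_integral_linear[OF V_int bounded_linear_fst]]
    by (simp add: o_def)
  have Vsnd: "((\<lambda>t. snd (V t)) has_integral snd (c 1) - snd (c 0)) {0..1}"
    using has_integral_linear[OF V_int bounded_linear_snd] by (simp add: o_def)
  have "snd (c 1) - snd (c 0) \<le> f * (fst (c 1) - fst (c 0))"
    by (rule has_integral_le_off_finite[OF Vsnd Vfst S]) (use Vbounds in force)
  moreover have "- (snd (c 1) - snd (c 0)) \<le> f * (fst (c 1) - fst (c 0))"
    by (rule has_integral_le_off_finite[OF has_integral_neg[OF Vsnd] Vfst S]) (use Vbounds in force)
  ultimately show Dsnd: "\<bar>snd (c 1) - snd (c 0)\<bar> \<le> f * (fst (c 1) - fst (c 0))"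
    by linarith
  let ?L = "\<lambda>t. sqrt (- gL (V t) (V t))"
  have "lor_length c = integral {0..1} ?L"
    unfolding lor_length_def V_def Let_def ..
  also have "\<dots> \<le> f * (fst (c 1) - fst (c 0))"
  proof (cases "?L integrable_on {0..1}")
    case True
    then show ?thesis
      by (rule has_integral_le_off_finite[OF integrable_integral Vfst S]) (use Vbounds(2) in blast)
  next
    case False
    then show ?thesis
      using Dsnd by (simp add: not_integrable_integral)
  qed
  finally show "lor_length c \<le> f * (fst (c 1) - fst (c 0))" .
qed

lemma future_causal_curve_bounds:
  assumes "future_causal_curve c x z"
  shows "\<bar>snd z - snd x\<bar> \<le> fst z - fst x" and "lor_length c \<le> fst z - fst x"
  using causal_curve_bounds[of 1 c] assms unfolding future_causal_curve_def by auto

lemma past_causal_curve_bounds: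
  assumes "past_causal_curve c x z"
  shows "\<bar>snd z - snd x\<bar> \<le> fst x - fst z" and "lor_length c \<le> fst x - fst z"
  using causal_curve_bounds[of "-1" c] assms unfolding past_causal_curve_def by auto

lemma sigma_eq_0_if_spacelike:
  assumes "\<bar>fst z - fst x\<bar> < \<bar>snd z - snd x\<bar>"
  shows "sigma x z = 0"
proof -
  have "z \<notin> causal_future x" "z \<notin> causal_past x"
    using assms future_causal_curve_bounds(1) past_causal_curve_bounds(1)
    unfolding causal_future_def causal_past_def by fastforce+
  then show ?thesis
    unfolding sigma_def by simp
qed

lemma lor_length_le_abs_sigma:
  assumes "future_causal_curve c x z \<or> past_causal_curve c x z" and "fst z \<noteq> fst x"
  shows "lor_length c \<le> \<bar>sigma x z\<bar>"
  using assms(1)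
proof (elim disjE)
  assume fc: "future_causal_curve c x z"
  then have "z \<in> causal_future x"
    unfolding causal_future_def by blast
  moreover have "lor_length c \<le> Sup (lor_length ` {c. future_causal_curve c x z})"
  proof (rule cSup_upper)
    show "bdd_above (lor_length ` {c. future_causal_curve c x z})"
      by (rule bdd_aboveI2[where M = "fst z - fst x"]) (simp add: future_causal_curve_bounds(2))
  qed (use fc in simp)
  ultimately show ?thesis
    unfolding sigma_def by simp
next
  assume pc: "past_causal_curve c x z"
  then have "z \<in> causal_past x"
    unfolding causal_past_def by blast
  moreover have "z \<notin> causal_future x"
  proof
    assume "z \<in> causal_future x"
    then obtain c' where "future_causal_curve c' x z"
      unfolding causal_future_def by blast
    then have "fst x \<le> fst z"
      using future_causal_curve_bounds(1) abs_ge_zero[of "snd z - snd x"] by (meson order_trans diff_ge_0_iff_ge)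
    moreover have "fst z \<le> fst x"
      using past_causal_curve_bounds(1)[OF pc] abs_ge_zero[of "snd z - snd x"] by linarith
    ultimately show False
      using assms(2) by simp
  qed
  moreover have "lor_length c \<le> Sup (lor_length ` {c. past_causal_curve c x z})"
  proof (rule cSup_upper)
    show "bdd_above (lor_length ` {c. past_causal_curve c x z})"
      by (rule bdd_aboveI2[where M = "fst x - fst z"]) (simp add: past_causal_curve_bounds(2))
  qed (use pc in simp)
  ultimately show ?thesis
    unfolding sigma_def by simp
qed

lemma convex_strip: "convex strip"
  unfolding strip_def by (intro convex_Times convex_real_interval convex_UNIV)

lemma linepath_in_strip: "x \<in> strip \<Longrightarrow> z \<in> strip \<Longrightarrow> linepath x z ` {0..1} \<subseteq> strip"
  unfolding linepath_image_01 by (rule closed_segment_subset[OF _ _ convex_strip])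

lemma linepath_causal_curve:
  assumes "x \<in> strip" "z \<in> strip" and "\<bar>snd z - snd x\<bar> \<le> \<bar>fst z - fst x\<bar>"
  shows "fst x \<le> fst z \<Longrightarrow> future_causal_curve (linepath x z) x z"
    and "fst z \<le> fst x \<Longrightarrow> past_causal_curve (linepath x z) x z"
proof -
  have "linepath x z piecewise_C1_differentiable_on {0..1}"
    using valid_path_linepath unfolding valid_path_def .
  moreover have "linepath x z 0 = x" "linepath x z 1 = z"
    by (simp_all add: linepath_def)
  moreover have "gL (z - x) (z - x) \<le> 0"
    using assms(3) unfolding abs_le_square_iff gL_def power2_eq_square by (simp add: algebra_simps)
  ultimately show "fst x \<le> fst z \<Longrightarrow> future_causal_curve (linepath x z) x z"
    and "fst z \<le> fst x \<Longrightarrow> past_causal_curve (linepath x z) x z"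
    using linepath_in_strip[OF assms(1,2)]
    by (auto simp: future_causal_curve_def past_causal_curve_def vector_derivative_linepath_within)
qed

lemma lor_length_linepath: "lor_length (linepath x z) = sqrt (- gL (z - x) (z - x))"
proof -
  have "lor_length (linepath x z) = integral {0..1} (\<lambda>t::real. sqrt (- gL (z - x) (z - x)))"
    unfolding lor_length_def Let_def
    by (intro integral_cong) (simp add: vector_derivative_linepath_within)
  then show ?thesis
    by simp
qed

lemma abs_sigma_ge_if_timelike:
  assumes "x \<in> strip" "z \<in> strip" and "\<bar>snd z - snd x\<bar> < \<bar>fst z - fst x\<bar>"
  shows "sqrt ((fst z - fst x)\<^sup>2 - (snd z - snd x)\<^sup>2) \<le> \<bar>sigma x z\<bar>"
proof -
  have "sqrt ((fst z - fst x)\<^sup>2 - (snd z - snd x)\<^sup>2) = lor_length (linepath x z)"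
    unfolding lor_length_linepath gL_def by (simp add: power2_eq_square algebra_simps)
  also have "\<dots> \<le> \<bar>sigma x z\<bar>"
  proof (rule lor_length_le_abs_sigma)
    show "future_causal_curve (linepath x z) x z \<or> past_causal_curve (linepath x z) x z"
      using linepath_causal_curve[OF assms(1,2)] assms(3) by (cases "fst x \<le> fst z") auto
  qed (use assms(3) in auto)
  finally show ?thesis .
qed

lemma esssup_ge_on_pos_measure:
  fixes f :: "'a \<Rightarrow> 'b::{second_countable_topology, dense_linorder, linorder_topology, complete_linorder}"
  assumes A: "A \<in> sets M" "0 < emeasure M A" and f: "\<And>x. x \<in> A \<Longrightarrow> m \<le> f x"
  shows "m \<le> esssup M f"
proof (cases "f \<in> borel_measurable M")
  case False
  then show ?thesis
    by (simp add: esssup_non_measurable)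
next
  case True
  show ?thesis
    unfolding esssup_eq_AE[OF True]
  proof (rule Inf_greatest, clarsimp)
    fix z
    assume ae: "AE x in M. f x \<le> z"
    show "m \<le> z"
    proof (rule ccontr)
      assume "\<not> m \<le> z"
      from ae have "AE x in M. x \<notin> A"
        by eventually_elim (use f \<open>\<not> m \<le> z\<close> in force)
      then have "A \<in> null_sets M"
        using AE_iff_null_sets[OF A(1)] by simp
      with A(2) show False
        by auto
    qed
  qed
qed

lemma dN_ge_on_rectangle:
  fixes a1 a2 b1 b2 :: real
  assumes "a1 < b1" "a2 < b2" and R_strip: "{a1..b1} \<times> {a2..b2} \<subseteq> strip"
    and m: "\<And>z. z \<in> {a1..b1} \<times> {a2..b2} \<Longrightarrow> m \<le> \<bar>\<bar>sigma x z\<bar> - \<bar>sigma y z\<bar>\<bar>"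
  shows "ereal m \<le> dN x y"
  unfolding dN_def
proof (rule esssup_ge_on_pos_measure)
  let ?R = "{a1..b1} \<times> {a2..b2}"
  have "closed strip" "closed ?R"
    unfolding strip_def by (intro closed_Times closed_atLeastAtMost closed_UNIV)+
  then have "strip \<in> sets lebesgue" "?R \<in> sets lebesgue"
    by simp_all
  moreover have "0 < emeasure lebesgue ?R"
  proof -
    have "?R = cbox (a1, a2) (b1, b2)"
      by (simp add: cbox_Pair_eq)
    moreover have "0 < emeasure lborel (cbox (a1, a2) (b1, b2))"
      using assms(1,2) by (simp add: emeasure_lborel_cbox_eq Basis_prod_def inner_Pair)
    ultimately show ?thesis
      by simp
  qed
  ultimately show "?R \<in> sets (lebesgue_on strip)" "0 < emeasure (lebesgue_on strip) ?R"
    using R_strip by (simp_all add: sets_restrict_space_iff emeasure_restrict_space)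
qed (use m in simp)

lemma dN_nonneg: "0 \<le> dN x y"
proof -
  have "ereal 0 \<le> dN x y"
    by (rule dN_ge_on_rectangle[of 0 "1/2" 0 "1/2"]) (auto simp: strip_def)
  then show ?thesis
    by (simp add: zero_ereal_def)
qed

lemma dN_commute: "dN x y = dN y x"
  unfolding dN_def by (simp add: abs_minus_commute)

(* a and b are the time and space offsets of a point z from p, oriented so that q lies at (q, delta);
   the square sits next to the null line b = -a through p, on the side away from q. *)
lemma null_cone_square_arith:
  fixes a b q \<delta> :: real
  assumes \<delta>: "0 < \<delta>" "\<delta> \<le> 1/4"
    and a: "\<bar>a - (1/4 + \<delta>/8)\<bar> \<le> \<delta>/8" and b: "\<bar>b - (\<delta>/2 - 1/4)\<bar> \<le> \<delta>/8"
    and q: "0 \<le> q" "q \<le> 1/4"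
  shows "0 \<le> a" "a \<le> 1" "\<bar>b\<bar> < \<bar>a\<bar>" "\<delta>/16 \<le> a\<^sup>2 - b\<^sup>2" "\<bar>a - q\<bar> < \<bar>b - \<delta>\<bar>"
proof -
  have a_bounds: "1/4 \<le> a" "a \<le> 1/4 + \<delta>/4"
    using a unfolding abs_le_iff by linarith+
  have b_bounds: "3 * \<delta> / 8 - 1/4 \<le> b" "b \<le> 5 * \<delta> / 8 - 1/4"
    using b unfolding abs_le_iff by linarith+
  have ab: "3 * \<delta> / 8 \<le> a + b" "1/4 \<le> a - b"
    using \<delta> a_bounds b_bounds by linarith+
  show "0 \<le> a" "a \<le> 1"
    using \<delta> a_bounds by linarith+
  show "\<bar>b\<bar> < \<bar>a\<bar>" "\<bar>a - q\<bar> < \<bar>b - \<delta>\<bar>"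
    using \<delta> a_bounds b_bounds q by (simp_all add: abs_if)
  have "\<delta>/16 \<le> (3 * \<delta> / 8) * (1/4)"
    using \<delta> by simp
  also have "\<dots> \<le> (a + b) * (a - b)"
    using \<delta> ab by (intro mult_mono) auto
  also have "\<dots> = a\<^sup>2 - b\<^sup>2"
    by (simp add: power2_eq_square algebra_simps)
  finally show "\<delta>/16 \<le> a\<^sup>2 - b\<^sup>2" .
qed

lemma dN_ge_sqrt_snd_dist_oriented:
  fixes p q :: "real \<times> real" and f :: real
  assumes p: "p \<in> strip" and f: "\<bar>f\<bar> = 1" "f * fst p \<le> 0"
    and dt: "0 \<le> f * (fst q - fst p)" "f * (fst q - fst p) \<le> 1/4"
    and ds: "\<bar>snd q - snd p\<bar> \<le> 1/4"
  shows "ereal (sqrt \<bar>snd q - snd p\<bar> / 4) \<le> dN p q"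
proof (cases "snd q = snd p")
  case True
  then show ?thesis
    using dN_nonneg by (simp add: zero_ereal_def)
next
  case False
  define \<delta> where "\<delta> = \<bar>snd q - snd p\<bar>"
  define e where "e = sgn (snd q - snd p)"
  have \<delta>: "0 < \<delta>" "\<delta> \<le> 1/4" "\<delta> = e * (snd q - snd p)"
    using False ds unfolding \<delta>_def e_def by (auto simp: sgn_if)
  have f_cases: "f = 1 \<or> f = -1" and e_cases: "e = 1 \<or> e = -1"
    using f False by (auto simp: e_def sgn_if abs_if split: if_splits)
  define t0 where "t0 = fst p + f * (1/4 + \<delta>/8)"
  define s0 where "s0 = snd p + e * (\<delta>/2 - 1/4)"
  let ?R = "{t0 - \<delta>/8 .. t0 + \<delta>/8} \<times> {s0 - \<delta>/8 .. s0 + \<delta>/8}"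
  have R: "z \<in> strip \<and> sqrt \<delta> / 4 \<le> \<bar>\<bar>sigma p z\<bar> - \<bar>sigma q z\<bar>\<bar>" if z: "z \<in> ?R" for z
  proof -
    define a where "a = f * (fst z - fst p)"
    define b where "b = e * (snd z - snd p)"
    have "\<bar>a - (1/4 + \<delta>/8)\<bar> = \<bar>fst z - t0\<bar>" "\<bar>b - (\<delta>/2 - 1/4)\<bar> = \<bar>snd z - s0\<bar>"
      using f_cases e_cases unfolding a_def b_def t0_def s0_def by auto
    moreover have "\<bar>fst z - t0\<bar> \<le> \<delta>/8" "\<bar>snd z - s0\<bar> \<le> \<delta>/8"
      using z unfolding abs_le_iff mem_Times_iff atLeastAtMost_iff by linarith+
    ultimately have "\<bar>a - (1/4 + \<delta>/8)\<bar> \<le> \<delta>/8" "\<bar>b - (\<delta>/2 - 1/4)\<bar> \<le> \<delta>/8"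
      by simp_all
    note ab = null_cone_square_arith[OF \<delta>(1,2) this dt]
    have rel_p: "\<bar>fst z - fst p\<bar> = \<bar>a\<bar>" "\<bar>snd z - snd p\<bar> = \<bar>b\<bar>"
      using f_cases e_cases unfolding a_def b_def by auto
    have rel_q: "\<bar>fst z - fst q\<bar> = \<bar>a - f * (fst q - fst p)\<bar>" "\<bar>snd z - snd q\<bar> = \<bar>b - \<delta>\<bar>"
      using f_cases e_cases \<delta>(3) unfolding a_def b_def by (auto simp: algebra_simps)
    have "\<bar>fst p\<bar> \<le> 1"
      using p unfolding strip_def by auto
    then have "\<bar>fst z\<bar> \<le> 1"
      using f_cases f(2) ab(1,2) unfolding a_def by auto
    then have z_strip: "z \<in> strip"
      unfolding strip_def by (cases z) auto
    have "sqrt \<delta> / 4 = sqrt (\<delta>/16)"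
      by (simp add: real_sqrt_divide)
    also have "\<dots> \<le> sqrt ((fst z - fst p)\<^sup>2 - (snd z - snd p)\<^sup>2)"
      using ab(4) rel_p by (metis power2_abs real_sqrt_le_mono)
    also have "\<dots> \<le> \<bar>sigma p z\<bar>"
      using abs_sigma_ge_if_timelike[OF p z_strip] ab(3) rel_p by simp
    finally have "sqrt \<delta> / 4 \<le> \<bar>sigma p z\<bar>" .
    moreover have "sigma q z = 0"
      using sigma_eq_0_if_spacelike ab(5) rel_q by simp
    ultimately show ?thesis
      using z_strip by simp
  qed
  have "ereal (sqrt \<delta> / 4) \<le> dN p q"
    by (rule dN_ge_on_rectangle[of "t0 - \<delta>/8" "t0 + \<delta>/8" "s0 - \<delta>/8" "s0 + \<delta>/8"])
      (use R \<delta>(1) in auto)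
  then show ?thesis
    unfolding \<delta>_def .
qed

lemma dN_ge_sqrt_snd_dist:
  fixes x y :: "real \<times> real"
  assumes x: "x \<in> strip" and y: "y \<in> strip"
    and dt: "\<bar>fst y - fst x\<bar> \<le> 1/4" and ds: "\<bar>snd y - snd x\<bar> \<le> 1/4"
  shows "ereal (sqrt \<bar>snd y - snd x\<bar> / 4) \<le> dN x y"
proof -
  define f where "f = (if fst x \<le> 0 then 1 else -1 :: real)"
  have f: "\<bar>f\<bar> = 1" "f * fst x \<le> 0"
    unfolding f_def by auto
  have dt_f: "\<bar>f * (fst y - fst x)\<bar> \<le> 1/4" "\<bar>f * (fst x - fst y)\<bar> \<le> 1/4"
    using dt f(1) by (simp_all add: abs_mult abs_minus_commute)
  show ?thesis
  proof (cases "0 \<le> f * (fst y - fst x)")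
    case True
    show ?thesis
      by (rule dN_ge_sqrt_snd_dist_oriented[OF x f True]) (use dt_f ds in \<open>auto simp: abs_le_iff\<close>)
  next
    case False
    then have "f * fst y \<le> 0" "0 \<le> f * (fst x - fst y)"
      unfolding f_def by (auto split: if_splits)
    then have "ereal (sqrt \<bar>snd x - snd y\<bar> / 4) \<le> dN y x"
      by (rule dN_ge_sqrt_snd_dist_oriented[OF y f(1)])
        (use dt_f ds in \<open>auto simp: abs_le_iff abs_minus_commute\<close>)
    then show ?thesis
      by (simp add: dN_commute abs_minus_commute)
  qed
qed

lemma sum_div_sqrt_le_sum_sqrt:
  fixes x :: "'a \<Rightarrow> real"
  assumes "0 < \<rho>" and x: "\<And>i. i \<in> I \<Longrightarrow> 0 \<le> x i \<and> x i \<le> \<rho>"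
  shows "(\<Sum>i\<in>I. x i) / sqrt \<rho> \<le> (\<Sum>i\<in>I. sqrt (x i))"
  unfolding sum_divide_distrib
proof (rule sum_mono)
  fix i
  assume "i \<in> I"
  with x have "0 \<le> x i" "x i \<le> \<rho>"
    by auto
  then have "x i = sqrt (x i) * sqrt (x i)"
    by simp
  also have "\<dots> \<le> sqrt (x i) * sqrt \<rho>"
    using \<open>0 \<le> x i\<close> \<open>x i \<le> \<rho>\<close> by (intro mult_left_mono real_sqrt_le_mono) auto
  finally show "x i / sqrt \<rho> \<le> sqrt (x i)"
    using \<open>0 < \<rho>\<close> by (simp add: divide_le_eq)
qed

lemma abs_diff_le_sum_abs_diffs:
  fixes g :: "nat \<Rightarrow> 'a::ordered_ab_group_add_abs"
  shows "\<bar>g N - g 0\<bar> \<le> (\<Sum>i\<in>{1..N}. \<bar>g i - g (i - 1)\<bar>)"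
proof -
  have "\<bar>g N - g 0\<bar> = \<bar>\<Sum>i<N. g (Suc i) - g i\<bar>"
    by (simp add: sum_lessThan_telescope)
  also have "\<dots> \<le> (\<Sum>i<N. \<bar>g (Suc i) - g i\<bar>)"
    by (rule sum_abs)
  also have "\<dots> = (\<Sum>i\<in>{1..N}. \<bar>g i - g (i - 1)\<bar>)"
    by (simp add: sum.atLeast1_atMost_eq)
  finally show ?thesis .
qed

lemma uniform_partition_fine:
  fixes c :: "real \<Rightarrow> 'a::metric_space"
  assumes "continuous_on {0..1} c" and "0 < \<epsilon>"
  obtains N :: nat where "0 < N" and "\<And>i. i \<in> {1..N} \<Longrightarrow> dist (c (real i / N)) (c (real (i - 1) / N)) < \<epsilon>"
proof -
  obtain d where "0 < d"
    and d: "\<And>s t. s \<in> {0..1} \<Longrightarrow> t \<in> {0..1} \<Longrightarrow> dist s t < d \<Longrightarrow> dist (c s) (c t) < \<epsilon>"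
    using compact_uniformly_continuous[OF assms(1) compact_Icc] \<open>0 < \<epsilon>\<close>
    unfolding uniformly_continuous_on_def by metis
  obtain N :: nat where N: "1 / d < N"
    using reals_Archimedean2 by blast
  with \<open>0 < d\<close> have "0 < N"
    by (smt (verit) divide_pos_pos of_nat_0_less_iff)
  moreover have "dist (c (real i / N)) (c (real (i - 1) / N)) < \<epsilon>" if "i \<in> {1..N}" for i
  proof (rule d)
    show "real i / N \<in> {0..1}" "real (i - 1) / N \<in> {0..1}"
      using that by auto
    have "dist (real i / N) (real (i - 1) / N) = 1 / N"
      using that by (simp add: dist_real_def of_nat_diff diff_divide_distrib[symmetric])
    also have "\<dots> < d"
      using N \<open>0 < d\<close> \<open>0 < N\<close> by (simp add: divide_less_eq mult.commute)
    finally show "dist (real i / N) (real (i - 1) / N) < d" .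
  qed
  ultimately show ?thesis
    using that by blast
qed

lemma sum_dN_ge:
  fixes x :: "nat \<Rightarrow> real \<times> real"
  assumes x: "\<And>i. i \<le> N \<Longrightarrow> x i \<in> strip" and \<rho>: "0 < \<rho>" "\<rho> \<le> 1/4"
    and steps: "\<And>i. i \<in> {1..N} \<Longrightarrow> dist (x i) (x (i - 1)) \<le> \<rho>"
  shows "ereal (\<bar>snd (x N) - snd (x 0)\<bar> / (4 * sqrt \<rho>)) \<le> (\<Sum>i\<in>{1..N}. dN (x (i - 1)) (x i))"
proof -
  define d where "d i = \<bar>snd (x i) - snd (x (i - 1))\<bar>" for i
  have d_le: "\<bar>fst (x i) - fst (x (i - 1))\<bar> \<le> \<rho>" "d i \<le> \<rho>" if "i \<in> {1..N}" for i
    using steps[OF that] dist_fst_le[of "x i" "x (i - 1)"] dist_snd_le[of "x i" "x (i - 1)"]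
    unfolding d_def dist_real_def by linarith+
  have "\<bar>snd (x N) - snd (x 0)\<bar> / (4 * sqrt \<rho>) \<le> ((\<Sum>i\<in>{1..N}. d i) / sqrt \<rho>) / 4"
    using abs_diff_le_sum_abs_diffs[of "\<lambda>i. snd (x i)" N] \<rho>
    unfolding d_def by (simp add: divide_right_mono field_simps)
  also have "\<dots> \<le> (\<Sum>i\<in>{1..N}. sqrt (d i)) / 4"
    using sum_div_sqrt_le_sum_sqrt[of \<rho> "{1..N}" d] \<rho>(1) d_le(2)
    by (simp add: d_def divide_right_mono)
  also have "\<dots> = (\<Sum>i\<in>{1..N}. sqrt (d i) / 4)"
    by (simp add: sum_divide_distrib)
  finally have "ereal (\<bar>snd (x N) - snd (x 0)\<bar> / (4 * sqrt \<rho>)) \<le> (\<Sum>i\<in>{1..N}. ereal (sqrt (d i) / 4))"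
    by (simp add: sum_ereal)
  also have "\<dots> \<le> (\<Sum>i\<in>{1..N}. dN (x (i - 1)) (x i))"
  proof (rule sum_mono)
    fix i
    assume i: "i \<in> {1..N}"
    then show "ereal (sqrt (d i) / 4) \<le> dN (x (i - 1)) (x i)"
      using x d_le[OF i] \<rho>(2) unfolding d_def by (intro dN_ge_sqrt_snd_dist) auto
  qed
  finally show ?thesis .
qed

lemma dN_partition_sums_unbounded:
  fixes c :: "real \<Rightarrow> real \<times> real"
  assumes cont: "continuous_on {0..1} c" and in_strip: "c ` {0..1} \<subseteq> strip"
    and ends: "snd (c 0) \<noteq> snd (c 1)"
  obtains N t where "t 0 = 0" "t N = 1" "\<forall>i<N. t i < t (Suc i)"
    and "ereal B \<le> (\<Sum>i\<in>{1..N}. dN (c (t (i - 1))) (c (t i)))"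
proof -
  define D where "D = \<bar>snd (c 1) - snd (c 0)\<bar>"
  define M where "M = max B 1"
  define \<rho> where "\<rho> = min (1/4) ((D / (4 * M))\<^sup>2)"
  have "0 < D" "0 < M"
    using ends unfolding D_def M_def by auto
  then have "0 < \<rho>"
    unfolding \<rho>_def by simp
  then obtain N :: nat where "0 < N"
    and N: "\<And>i. i \<in> {1..N} \<Longrightarrow> dist (c (real i / N)) (c (real (i - 1) / N)) < \<rho>"
    using uniform_partition_fine[OF cont] by blast
  define t where "t i = real i / N" for i
  have t: "t 0 = 0" "t N = 1" "\<forall>i<N. t i < t (Suc i)"
    using \<open>0 < N\<close> unfolding t_def by (auto simp: divide_strict_right_mono)
  have "sqrt \<rho> \<le> D / (4 * M)"
    using \<open>0 < D\<close> \<open>0 < M\<close> real_sqrt_le_mono[of \<rho> "(D / (4 * M))\<^sup>2"] unfolding \<rho>_def by simp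
  then have "4 * M * sqrt \<rho> \<le> D"
    using \<open>0 < M\<close> by (simp add: le_divide_eq algebra_simps)
  then have "M \<le> D / (4 * sqrt \<rho>)"
    using \<open>0 < \<rho>\<close> by (simp add: le_divide_eq algebra_simps)
  then have "B \<le> D / (4 * sqrt \<rho>)"
    unfolding M_def by linarith
  then have "ereal B \<le> ereal (\<bar>snd (c (t N)) - snd (c (t 0))\<bar> / (4 * sqrt \<rho>))"
    using t unfolding D_def by simp
  also have "\<dots> \<le> (\<Sum>i\<in>{1..N}. dN (c (t (i - 1))) (c (t i)))"
  proof (rule sum_dN_ge)
    show "c (t i) \<in> strip" if "i \<le> N" for i
      using in_strip that \<open>0 < N\<close> unfolding t_def by auto
    show "dist (c (t i)) (c (t (i - 1))) \<le> \<rho>" if "i \<in> {1..N}" for i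
      using N[OF that] unfolding t_def by simp
  qed (use \<open>0 < \<rho>\<close> in \<open>simp_all add: \<rho>_def\<close>)
  finally show ?thesis
    using that t by blast
qed

theorem theorem3:
  fixes c :: "real \<Rightarrow> real \<times> real"
  assumes "continuous_on {0..1} c"
    and "c ` {0..1} \<subseteq> strip"
    and "snd (c 0) \<noteq> snd (c 1)"
  shows "\<not> dN_rectifiable c"
proof -
  let ?P = "{(N::nat, t::nat \<Rightarrow> real). t 0 = 0 \<and> t N = 1 \<and> (\<forall>i<N. t i < t (Suc i))}"
  let ?S = "\<lambda>(N, t). \<Sum>i\<in>{1..N}. dN (c (t (i - 1))) (c (t i))"
  have "(SUP p\<in>?P. ?S p) = \<infinity>"
  proof (rule ereal_top)
    fix B
    obtain N t where "t 0 = 0" "t N = 1" "\<forall>i<N. t i < t (Suc i)"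
      and B: "ereal B \<le> (\<Sum>i\<in>{1..N}. dN (c (t (i - 1))) (c (t i)))"
      by (rule dN_partition_sums_unbounded[OF assms])
    then have "(N, t) \<in> ?P"
      by simp
    then show "ereal B \<le> (SUP p\<in>?P. ?S p)"
      by (rule SUP_upper2) (use B in simp)
  qed
  then show ?thesis
    unfolding dN_rectifiable_def by simp
qed

end
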